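(* Let $\mathbb{K}$ be an algebraically closed field of characteristic zero and let $D=\partial_x+(ay+b)\partial_y$ be a derivation of $\mathbb{K}[x,y]$ with $a,b\in\mathbb{K}[x]$, $a\neq 0$, and $\deg a\geq 1$ or $\deg b\geq 1$. Then $\mathrm{Aut}(D)\neq\{\mathrm{id}\}$ if and only if there exists $h\in\mathbb{K}[x]$ with $D(h)=ah+b$ (that is, $h'=ah+b$). In particular, if $\mathrm{Aut}(D)\neq\{\mathrm{id}\}$ and $b\neq 0$, then $\deg b\geq\deg a$.
   Context: $\mathrm{Aut}(D)$ denotes the group of $\mathbb{K}$-algebra automorphisms $\rho$ of $\mathbb{K}[x,y]$ with $\rho D=D\rho$. *)

theory Defs
  imports "HOL-Computational_Algebra.Polynomial"
begin

text \<open>K[x,y] is represented as ('k poly) poly = (K[x])[y]: the outer variable is y,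
  the coefficients are polynomials in x.\<close>

definition const2 :: "'k::comm_ring_1 \<Rightarrow> 'k poly poly" where
  "const2 c = [:[:c:]:]"

definition kalg_aut :: "('k::field poly poly \<Rightarrow> 'k poly poly) \<Rightarrow> bool" where
  "kalg_aut \<rho> \<longleftrightarrow> bij \<rho> \<and> (\<forall>p q. \<rho> (p + q) = \<rho> p + \<rho> q)
     \<and> (\<forall>p q. \<rho> (p * q) = \<rho> p * \<rho> q) \<and> (\<forall>c. \<rho> (const2 c) = const2 c)"

definition derD :: "'k::field poly \<Rightarrow> 'k poly \<Rightarrow> 'k poly poly \<Rightarrow> 'k poly poly" where
  "derD a b p = map_poly pderiv p + [:b, a:] * pderiv p"

definition AutD :: "'k::field poly \<Rightarrow> 'k poly \<Rightarrow> ('k poly poly \<Rightarrow> 'k poly poly) set" where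
  "AutD a b = {\<rho>. kalg_aut \<rho> \<and> \<rho> \<circ> derD a b = derD a b \<circ> \<rho>}"

end

theory Submission
  imports Defs
begin

text \<open>
  If \<open>h' = a h + b\<close>, then \<open>y - h\<close> satisfies \<open>D(y - h) = a (y - h)\<close>, so the reflection
  \<open>y \<mapsto> 2h - y\<close> commutes with \<open>D\<close>; it is a nontrivial element of \<open>Aut(D)\<close>.
  Conversely, if \<open>a\<close> is constant, \<open>h' = a h + b\<close> is always solvable. Otherwise let
  \<open>\<rho> \<in> Aut(D)\<close>. Since \<open>D(\<rho> x - x) = 0\<close> and the kernel of \<open>D\<close> consists of constants,
  \<open>\<rho>\<close> translates \<open>x\<close> by some \<open>c\<close>. Comparing leading \<open>y\<close>-coefficients in
  \<open>D(\<rho> y) = \<rho>(D y)\<close> forces \<open>\<rho> y\<close> to have \<open>y\<close>-degree 1 and \<open>a(x + c) = a(x)\<close>,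
  hence \<open>c = 0\<close>. Then \<open>\<rho> y = \<lambda> y + g\<close> with \<open>\<lambda> \<in> \<bbbK>\<close> and \<open>g' = a g + (1 - \<lambda>) b\<close>:
  either \<open>\<lambda> = 1\<close>, \<open>g = 0\<close> and \<open>\<rho> = id\<close>, or \<open>h = g / (1 - \<lambda>)\<close> solves the equation.
  The degree bound holds because \<open>deg (h' - a h) = deg a + deg h\<close>.
\<close>

abbreviation var_x :: "'k::comm_ring_1 poly poly" where
  "var_x \<equiv> [:[:0, 1:]:]"

abbreviation var_y :: "'k::comm_ring_1 poly poly" where
  "var_y \<equiv> [:0, 1:]"

abbreviation Dx :: "'k::idom poly poly \<Rightarrow> 'k poly poly" where
  "Dx p \<equiv> map_poly pderiv p"

subsection \<open>The partial derivative in \<open>x\<close>\<close>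

lemma pderiv_sum: "pderiv (sum f A) = (\<Sum>i\<in>A. pderiv (f i))"
  by (induction A rule: infinite_finite_induct) (auto simp: pderiv_add)

lemma coeff_Dx: "coeff (Dx p) n = pderiv (coeff p n)"
  by (simp add: coeff_map_poly)

lemma Dx_add: "Dx (p + q) = Dx p + Dx q"
  by (rule poly_eqI) (simp add: coeff_Dx pderiv_add)

lemma Dx_diff: "Dx (p - q) = Dx p - Dx q"
  by (rule poly_eqI) (simp add: coeff_Dx pderiv_diff)

lemma Dx_pCons: "Dx (pCons c p) = pCons (pderiv c) (Dx p)"
  by (simp add: map_poly_pCons)

lemma Dx_mult: "Dx (p * q) = Dx p * q + p * Dx q"
proof (rule poly_eqI)
  fix n
  have "coeff (Dx (p * q)) n = (\<Sum>i\<le>n. pderiv (coeff p i * coeff q (n - i)))"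
    by (simp add: coeff_Dx coeff_mult pderiv_sum)
  also have "\<dots> = (\<Sum>i\<le>n. pderiv (coeff p i) * coeff q (n - i) + coeff p i * pderiv (coeff q (n - i)))"
    by (rule sum.cong) (simp_all add: pderiv_mult)
  also have "\<dots> = coeff (Dx p * q + p * Dx q) n"
    unfolding coeff_add coeff_mult coeff_Dx sum.distrib ..
  finally show "coeff (Dx (p * q)) n = coeff (Dx p * q + p * Dx q) n" .
qed

lemma Dx_pcompose: "Dx (pcompose p q) = pcompose (Dx p) q + pcompose (pderiv p) q * Dx q"
  by (induction p)
     (simp_all add: pcompose_pCons Dx_pCons Dx_add Dx_mult pderiv_pCons pcompose_add algebra_simps)

subsection \<open>Linear differential equations over \<open>\<bbbK>[x]\<close>\<close>

lemma pderiv_eq_mult_imp_zero: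
  fixes u v :: "'k::field_char_0 poly"
  assumes "pderiv u = v * u" and "v \<noteq> 0"
  shows "u = 0"
proof (rule ccontr)
  assume u: "u \<noteq> 0"
  show False
  proof (cases "degree u = 0")
    case True
    then have "pderiv u = 0" by (simp add: pderiv_eq_0_iff)
    then show False using assms u by simp
  next
    case False
    then have "degree (pderiv u) < degree u" by (simp add: degree_pderiv)
    also have "degree u \<le> degree (v * u)" using u assms(2) by (simp add: degree_mult_eq)
    finally show False using assms(1) by simp
  qed
qed

lemma pderiv_eq_const_mult_add_solvable:
  fixes \<alpha> :: "'k::field_char_0"
  assumes "\<alpha> \<noteq> 0"
  shows "\<exists>h. pderiv h = [:\<alpha>:] * h + b"
proof (induction "degree b" arbitrary: b rule: less_induct)
  case less
  show ?case
  proof (cases "degree b = 0")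
    case True
    then show ?thesis
      by (intro exI[of _ "smult (- 1 / \<alpha>) b"]) (simp add: pderiv_smult pderiv_eq_0_iff assms)
  next
    case False
    then have "degree (smult (1 / \<alpha>) (pderiv b)) < degree b" by (simp add: degree_pderiv)
    then obtain h where "pderiv h = [:\<alpha>:] * h + smult (1 / \<alpha>) (pderiv b)"
      using less by blast
    then show ?thesis
      by (intro exI[of _ "smult (- 1 / \<alpha>) b + h"]) (simp add: pderiv_add pderiv_diff pderiv_minus pderiv_smult assms algebra_simps)
  qed
qed

lemma degree_le_of_pderiv_eq:
  fixes a b h :: "'k::field_char_0 poly"
  assumes "pderiv h = a * h + b" and "b \<noteq> 0" and "a \<noteq> 0"
  shows "degree a \<le> degree b"
proof -
  have "h \<noteq> 0" using assms by auto
  then have dah: "degree (a * h) = degree a + degree h" using assms(3) by (simp add: degree_mult_eq)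
  have b: "b = pderiv h + - (a * h)" using assms(1) by simp
  show ?thesis
  proof (cases "degree h = 0")
    case True
    then have "pderiv h = 0" by (simp add: pderiv_eq_0_iff)
    then show ?thesis using b dah by simp
  next
    case False
    then have "degree (pderiv h) < degree (- (a * h))" using dah by (simp add: degree_pderiv)
    then have "degree b = degree (a * h)" unfolding b by (subst degree_add_eq_right) simp_all
    then show ?thesis using dah by simp
  qed
qed

lemma shift_invariant_poly_imp_zero_shift:
  fixes a :: "'k::field_char_0 poly"
  assumes "pcompose a [:c, 1:] = a" and "degree a \<ge> 1"
  shows "c = 0"
proof (rule ccontr)
  assume c: "c \<noteq> 0"
  have shift: "poly a (c + x) = poly a x" for x
    using arg_cong[OF assms(1), of "\<lambda>p. poly p x"] by (simp add: poly_pcompose)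
  have multiples: "poly a (of_nat k * c) = poly a 0" for k
    by (induction k) (simp_all add: algebra_simps shift)
  have nonconst: "a - [:poly a 0:] \<noteq> 0"
    using assms(2) by (metis degree_pCons_0 eq_iff_diff_eq_0 not_one_le_zero)
  have "range (\<lambda>k::nat. of_nat k * c) \<subseteq> {x. poly (a - [:poly a 0:]) x = 0}"
    using multiples by auto
  moreover have "infinite (range (\<lambda>k::nat. of_nat k * c))"
    by (rule range_inj_infinite) (simp add: inj_def c)
  ultimately show False using poly_roots_finite[OF nonconst] finite_subset by blast
qed

subsection \<open>The derivation \<open>D\<close>\<close>

lemma coeff_derD:
  fixes a b :: "'k::field_char_0 poly"
  shows "coeff (derD a b p) n = pderiv (coeff p n) + of_nat n * a * coeff p n
     + of_nat (Suc n) * b * coeff p (Suc n)"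
  unfolding derD_def by (cases n) (simp_all add: coeff_Dx coeff_pderiv algebra_simps)

lemma coeff_derD_degree:
  fixes a b :: "'k::field_char_0 poly"
  shows "coeff (derD a b p) (degree p) = pderiv (lead_coeff p) + of_nat (degree p) * a * lead_coeff p"
  by (simp add: coeff_derD coeff_eq_0)

lemma derD_diff:
  fixes a b :: "'k::field_char_0 poly"
  shows "derD a b (p - q) = derD a b p - derD a b q"
  unfolding derD_def by (simp add: Dx_diff pderiv_diff algebra_simps smult_diff_right)

lemma derD_var_x: "derD a b (var_x :: 'k::field_char_0 poly poly) = 1"
  unfolding derD_def by (simp add: Dx_pCons one_pCons pderiv_pCons)

lemma derD_var_y: "derD a b (var_y :: 'k::field_char_0 poly poly) = [:b:] + var_y * [:a:]"
  unfolding derD_def by (simp add: Dx_pCons pderiv_pCons)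

lemma derD_eq_0_imp_const:
  fixes a b :: "'k::field_char_0 poly"
  assumes "a \<noteq> 0" and "derD a b k = 0"
  shows "\<exists>c. k = const2 c"
proof -
  have "degree k = 0"
  proof (rule ccontr)
    assume n: "degree k \<noteq> 0"
    have "pderiv (lead_coeff k) = (- (of_nat (degree k) * a)) * lead_coeff k"
      using coeff_derD_degree[of a b k] assms(2) by (simp add: add_eq_0_iff2)
    then have "lead_coeff k = 0"
      by (rule pderiv_eq_mult_imp_zero) (use n assms(1) in simp)
    then show False using n by simp
  qed
  then obtain k0 where k: "k = [:k0:]" by (metis degree_eq_zeroE)
  have "pderiv k0 = 0" using arg_cong[OF assms(2), of "\<lambda>p. coeff p 0"] by (simp add: coeff_derD k)
  then obtain c where "k0 = [:c:]" using pderiv_iszero by blast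
  then show ?thesis using k by (auto simp: const2_def)
qed

subsection \<open>The reflection \<open>y \<mapsto> 2h - y\<close>\<close>

definition reflect_y :: "'k::field_char_0 poly \<Rightarrow> 'k poly poly \<Rightarrow> 'k poly poly" where
  "reflect_y h p = pcompose p [:smult 2 h, -1:]"

lemma reflect_y_reflect_y:
  fixes h :: "'k::field_char_0 poly"
  shows "reflect_y h (reflect_y h p) = p"
proof -
  have "pcompose [:smult 2 h, -1:] [:smult 2 h, -1:] = (var_y :: 'k poly poly)"
    by (simp add: pcompose_pCons)
  then show ?thesis unfolding reflect_y_def by (simp add: pcompose_assoc[symmetric])
qed

lemma kalg_aut_reflect_y:
  fixes h :: "'k::field_char_0 poly"
  shows "kalg_aut (reflect_y h)"
  unfolding kalg_aut_def
proof (intro conjI allI)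
  show "bij (reflect_y h)"
    by (rule o_bij[of "reflect_y h"]) (auto simp: reflect_y_reflect_y)
qed (auto simp: reflect_y_def pcompose_add pcompose_mult const2_def)

lemma reflect_y_neq_id:
  fixes h :: "'k::field_char_0 poly"
  shows "reflect_y h \<noteq> id"
proof
  assume "reflect_y h = id"
  then have "reflect_y h var_y = var_y" by simp
  then have "[:smult 2 h, -1:] = (var_y :: 'k poly poly)"
    by (simp add: reflect_y_def pcompose_pCons)
  then have "(2 :: 'k poly) = 0" by (simp add: eq_neg_iff_add_eq_0 one_add_one)
  then show False by simp
qed

lemma reflect_y_derD:
  fixes h :: "'k::field_char_0 poly"
  assumes "pderiv h = a * h + b"
  shows "reflect_y h (derD a b p) = derD a b (reflect_y h p)"
proof -
  let ?q = "[:smult 2 h, -1:]" and ?h' = "[:smult 2 (pderiv h):]"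
  let ?P = "pcompose (pderiv p) ?q" and ?R = "pcompose (Dx p) ?q"
  have twice: "smult 2 x = x * 2" for x :: "'k poly"
    by (simp add: numeral_mult_conv_smult[symmetric] mult.commute)
  have ba: "pcompose [:b, a:] ?q = ?h' - [:b, a:]"
    using twice[of b] twice[of "a * h"] by (simp add: pcompose_pCons assms algebra_simps smult_add_right)
  have ring_identity: "R + P * C + B * (P * [:-1:]) = R + (C - B) * P" for R P C B :: "'k poly poly"
    by (simp add: one_pCons[symmetric] minus_pCons[symmetric] algebra_simps)
  have Dq: "Dx ?q = ?h'" by (simp add: Dx_pCons pderiv_smult pderiv_minus)
  have pq: "pderiv ?q = [:-1:]" by (simp add: pderiv_pCons)
  have "derD a b (pcompose p ?q) = ?R + ?P * ?h' + [:b, a:] * (?P * [:-1:])"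
    unfolding derD_def by (simp only: Dx_pcompose pderiv_pcompose Dq pq)
  also have "\<dots> = ?R + (?h' - [:b, a:]) * ?P"
    by (rule ring_identity)
  also have "\<dots> = pcompose (derD a b p) ?q"
    unfolding derD_def by (simp only: pcompose_add pcompose_mult ba)
  finally show ?thesis unfolding reflect_y_def ..
qed

lemma reflect_y_in_AutD:
  assumes "pderiv h = a * h + b"
  shows "reflect_y h \<in> AutD a b"
  using kalg_aut_reflect_y reflect_y_derD[OF assms] by (auto simp: AutD_def)

subsection \<open>Automorphisms commuting with \<open>D\<close>\<close>

lemma kalg_autD:
  assumes "kalg_aut \<rho>"
  shows "\<rho> (p + q) = \<rho> p + \<rho> q" "\<rho> (p * q) = \<rho> p * \<rho> q" "\<rho> (const2 c) = const2 c" "inj \<rho>"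
  using assms by (auto simp: kalg_aut_def bij_def)

lemma kalg_aut_one: "kalg_aut \<rho> \<Longrightarrow> \<rho> 1 = 1"
  using kalg_autD(3)[of \<rho> 1] by (simp add: const2_def one_pCons)

lemma kalg_aut_poly_x:
  assumes "kalg_aut \<rho>" and "\<rho> var_x = [:q:]"
  shows "\<rho> [:p:] = [:pcompose p q:]"
proof (induction p)
  case 0
  show ?case using kalg_autD(3)[OF assms(1), of 0] by (simp add: const2_def)
next
  case (pCons k p)
  have x_times: "[:pCons k p:] = const2 k + var_x * [:p:]"
    by (simp add: const2_def)
  have "\<rho> [:pCons k p:] = const2 k + [:q:] * [:pcompose p q:]"
    unfolding x_times kalg_autD(1-3)[OF assms(1)] assms(2) pCons.IH ..
  then show ?case by (simp add: const2_def pcompose_pCons)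
qed

lemma kalg_aut_eq_id:
  assumes "kalg_aut \<rho>" and "\<rho> var_x = var_x" and "\<rho> var_y = var_y"
  shows "\<rho> = id"
proof
  fix p
  show "\<rho> p = id p"
  proof (induction p)
    case 0
    show ?case using kalg_autD(3)[OF assms(1), of 0] by (simp add: const2_def)
  next
    case (pCons q p)
    have "\<rho> [:q:] = [:q:]" using kalg_aut_poly_x[OF assms(1,2)] by simp
    moreover have "pCons q p = [:q:] + var_y * p" by simp
    ultimately show ?case
      using pCons.IH by (metis id_apply kalg_autD(1,2)[OF assms(1)] assms(3))
  qed
qed

lemma AutD_D:
  assumes "\<rho> \<in> AutD a b"
  shows "kalg_aut \<rho>" and "\<rho> (derD a b p) = derD a b (\<rho> p)"
  using assms by (auto simp: AutD_def fun_eq_iff)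

lemma AutD_var_x_shift:
  fixes a b :: "'k::field_char_0 poly"
  assumes "a \<noteq> 0" and "\<rho> \<in> AutD a b"
  obtains c where "\<rho> var_x = [:[:c, 1:]:]"
proof -
  have "derD a b (\<rho> var_x) = 1"
    using AutD_D(2)[OF assms(2), of var_x] kalg_aut_one[OF AutD_D(1)[OF assms(2)]]
    by (simp add: derD_var_x)
  then have "derD a b (\<rho> var_x - var_x) = 0"
    by (simp add: derD_diff derD_var_x)
  then obtain c where "\<rho> var_x - var_x = const2 c"
    using derD_eq_0_imp_const[OF assms(1)] by blast
  then have "\<rho> var_x = [:[:c, 1:]:]"
    by (simp add: const2_def diff_eq_eq)
  then show thesis by (rule that)
qed

lemma AutD_fixes_var_x:
  fixes a b :: "'k::field_char_0 poly"
  assumes "a \<noteq> 0" and "degree a \<ge> 1" and "\<rho> \<in> AutD a b"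
  shows "\<rho> var_x = var_x" and "degree (\<rho> var_y) = 1"
proof -
  note aut = AutD_D(1)[OF assms(3)]
  obtain c where \<rho>x: "\<rho> var_x = [:[:c, 1:]:]" using AutD_var_x_shift[OF assms(1,3)] .
  define g where "g = \<rho> var_y"
  define A where "A = pcompose a [:c, 1:]"
  define B where "B = pcompose b [:c, 1:]"
  have Dg: "derD a b g = [:B:] + g * [:A:]"
    unfolding g_def AutD_D(2)[OF assms(3), symmetric] derD_var_y kalg_autD(1,2)[OF aut]
      kalg_aut_poly_x[OF aut \<rho>x] A_def B_def ..
  have "degree g \<noteq> 0"
  proof
    assume "degree g = 0"
    then obtain g0 where "g = [:g0:]" by (metis degree_eq_zeroE)
    moreover have "\<rho> [:pcompose g0 [:-c, 1:]:] = [:g0:]"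
      by (simp add: kalg_aut_poly_x[OF aut \<rho>x] pcompose_assoc[symmetric] pcompose_pCons)
    ultimately have "\<rho> [:pcompose g0 [:-c, 1:]:] = \<rho> var_y" by (simp add: g_def)
    then have "[:pcompose g0 [:-c, 1:]:] = var_y" by (rule injD[OF kalg_autD(4)[OF aut]])
    then show False by simp
  qed
  then have "coeff (derD a b g) (degree g) = lead_coeff g * A"
    by (simp add: Dg coeff_pCons split: nat.split)
  then have "pderiv (lead_coeff g) = (A - of_nat (degree g) * a) * lead_coeff g"
    by (simp add: coeff_derD_degree algebra_simps)
  then have A: "A = of_nat (degree g) * a"
    using pderiv_eq_mult_imp_zero \<open>degree g \<noteq> 0\<close> by force
  have "lead_coeff A = lead_coeff a"
    unfolding A_def by (subst lead_coeff_comp) simp_all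
  moreover have "lead_coeff A = of_nat (degree g) * lead_coeff a"
    unfolding A by (simp add: lead_coeff_mult of_nat_poly)
  ultimately have "(of_nat (degree g) :: 'k) = 1" using assms(1) by simp
  then have "degree g = 1" by (metis of_nat_1 of_nat_eq_iff)
  then show "degree (\<rho> var_y) = 1" by (simp add: g_def)
  have "c = 0"
    using A \<open>degree g = 1\<close> assms(2) shift_invariant_poly_imp_zero_shift by (simp add: A_def)
  then show "\<rho> var_x = var_x" using \<rho>x by simp
qed

lemma AutD_var_y_affine:
  fixes a b :: "'k::field_char_0 poly"
  assumes "a \<noteq> 0" and "degree a \<ge> 1" and "\<rho> \<in> AutD a b"
  obtains g l where "\<rho> var_y = [:g, [:l:]:]" and "pderiv g = a * g + smult (1 - l) b"
proof -
  note aut = AutD_D(1)[OF assms(3)]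
  note \<rho>x = AutD_fixes_var_x(1)[OF assms]
  define g where "g = \<rho> var_y"
  have "derD a b g = [:b:] + g * [:a:]"
    using kalg_aut_poly_x[OF aut, of "[:0, 1:]"] \<rho>x
    unfolding g_def AutD_D(2)[OF assms(3), symmetric] derD_var_y kalg_autD(1,2)[OF aut]
    by simp
  then have "coeff (derD a b g) n = (if n = 0 then b else 0) + coeff g n * a" for n
    by (simp add: coeff_pCons split: nat.split)
  note Dg = this[unfolded coeff_derD]
  have deg: "degree g = 1" using AutD_fixes_var_x(2)[OF assms] by (simp add: g_def)
  have "pderiv (coeff g 1) = 0"
    using Dg[of 1] deg by (simp add: coeff_eq_0 algebra_simps)
  then obtain l where l: "coeff g 1 = [:l:]" using pderiv_iszero by blast
  have "g = [:coeff g 0, [:l:]:]"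
    using deg l by (intro poly_eqI) (auto simp: coeff_pCons coeff_eq_0 split: nat.split)
  moreover have "pderiv (coeff g 0) = a * coeff g 0 + smult (1 - l) b"
    using Dg[of 0] l by (simp add: algebra_simps smult_diff_left)
  ultimately show thesis using that g_def by blast
qed

lemma AutD_nontrivial_imp_solvable:
  fixes a b :: "'k::field_char_0 poly"
  assumes "a \<noteq> 0" and "\<rho> \<in> AutD a b" and "\<rho> \<noteq> id"
  shows "\<exists>h. pderiv h = a * h + b"
proof (cases "degree a = 0")
  case True
  then obtain \<alpha> where "a = [:\<alpha>:]" by (metis degree_eq_zeroE)
  then show ?thesis using assms(1) pderiv_eq_const_mult_add_solvable by auto
next
  case False
  then have deg: "degree a \<ge> 1" by simp
  obtain g l where \<rho>y: "\<rho> var_y = [:g, [:l:]:]" and g: "pderiv g = a * g + smult (1 - l) b"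
    using AutD_var_y_affine[OF assms(1) deg assms(2)] .
  have "l \<noteq> 1"
  proof
    assume "l = 1"
    then have "g = 0" using g assms(1) pderiv_eq_mult_imp_zero by simp
    then have "\<rho> var_y = var_y" using \<rho>y \<open>l = 1\<close> by (simp add: pCons_one)
    then have "\<rho> = id"
      using kalg_aut_eq_id AutD_D(1)[OF assms(2)] AutD_fixes_var_x(1)[OF assms(1) deg assms(2)]
      by blast
    with assms(3) show False ..
  qed
  then have "pderiv (smult (1 / (1 - l)) g) = a * smult (1 / (1 - l)) g + b"
    by (simp add: pderiv_smult g smult_add_right)
  then show ?thesis ..
qed

theorem corollary3p5:
  fixes a b :: "'k::{alg_closed_field, field_char_0} poly"
  assumes "a \<noteq> 0"
    and "degree a \<ge> 1 \<or> degree b \<ge> 1"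
  shows "(AutD a b \<noteq> {id} \<longleftrightarrow> (\<exists>h. pderiv h = a * h + b))
       \<and> (AutD a b \<noteq> {id} \<and> b \<noteq> 0 \<longrightarrow> degree b \<ge> degree a)"
proof -
  have "id \<in> AutD a b" by (simp add: AutD_def kalg_aut_def)
  then have "AutD a b \<noteq> {id} \<longleftrightarrow> (\<exists>\<rho>\<in>AutD a b. \<rho> \<noteq> id)" by blast
  also have "\<dots> \<longleftrightarrow> (\<exists>h. pderiv h = a * h + b)"
    using AutD_nontrivial_imp_solvable[OF assms(1)] reflect_y_in_AutD reflect_y_neq_id by blast
  finally show ?thesis using degree_le_of_pderiv_eq assms(1) by blast
qed

end
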